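(* Let $r_1,r_2:\mathcal{X}\times\mathcal{Y}\to\mathbb{R}$ satisfy $\|r_1\|_\infty\le C$ and $\|r_2\|_\infty\le C$. For $x\in\mathcal{X}$ and $y_1,y_2\in\mathcal{Y}$ let $\delta_x(r_1,r_2,y_1,y_2)=r_1(x,y_1)-r_1(x,y_2)-(r_2(x,y_1)-r_2(x,y_2))$. Then $$\delta_x(r_1,r_2,y_1,y_2)^2\le 2(3+\exp(2C))^2\,D_{\mathrm H}^2\big(\mathbb{P}_{r_1}(\cdot|x,y_1,y_2)\,\|\,\mathbb{P}_{r_2}(\cdot|x,y_1,y_2)\big).$$
   Context: For a reward $r$, $\mathbb{P}_r(\cdot|x,y_1,y_2)$ is the Bernoulli distribution of the outcome of comparing $(x,y_1)$ and $(x,y_2)$ under the Bradley–Terry model, with $\mathbb{P}_r(y_1\succ y_2|x)=\sigma(r(x,y_1)-r(x,y_2))$ and $\sigma$ the logistic function. The squared Hellinger distance between distributions $P,Q$ on a finite set is $D_{\mathrm H}^2(P\|Q)=\frac12\sum_\omega(\sqrt{P(\omega)}-\sqrt{Q(\omega)})^2$. *)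

theory Defs
  imports "HOL-Analysis.Analysis"
begin

definition logistic :: "real \<Rightarrow> real" where
  "logistic t = 1 / (1 + exp (- t))"

text \<open>Bradley-Terry comparison outcome distribution on the two-point outcome space bool:
  True means y1 is preferred to y2, False means y2 is preferred to y1.\<close>
definition BT_prob :: "('x \<Rightarrow> 'y \<Rightarrow> real) \<Rightarrow> 'x \<Rightarrow> 'y \<Rightarrow> 'y \<Rightarrow> bool \<Rightarrow> real" where
  "BT_prob r x y1 y2 b =
     (if b then logistic (r x y1 - r x y2) else 1 - logistic (r x y1 - r x y2))"

definition hellinger_sq :: "('a::finite \<Rightarrow> real) \<Rightarrow> ('a \<Rightarrow> real) \<Rightarrow> real" where
  "hellinger_sq P Q = (1/2) * (\<Sum>\<omega>\<in>UNIV. (sqrt (P \<omega>) - sqrt (Q \<omega>))^2)"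

definition delta_BT :: "('x \<Rightarrow> 'y \<Rightarrow> real) \<Rightarrow> ('x \<Rightarrow> 'y \<Rightarrow> real) \<Rightarrow> 'x \<Rightarrow> 'y \<Rightarrow> 'y \<Rightarrow> real" where
  "delta_BT r1 r2 x y1 y2 = r1 x y1 - r1 x y2 - (r2 x y1 - r2 x y2)"

end

theory Submission
  imports Defs
begin

text \<open>The logistic function is strictly increasing with derivative
  \<open>1 / (exp t + 2 + exp (-t))\<close>, which on \<open>[-M, M]\<close> is at least \<open>1 / (3 + exp M)\<close>; by the mean
  value theorem, reward gaps bounded by \<open>2C\<close> are thus controlled by \<open>3 + exp (2C)\<close> times the
  difference of the preference probabilities. For Bernoulli distributions, in turn, the squared
  difference of the success probabilities is at most twice the squared Hellinger distance,
  because \<open>p - q = (\<surd>p - \<surd>q)(\<surd>p + \<surd>q)\<close> for both outcomes and the two sums of square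
  roots have squares adding up to at most 4.\<close>

lemma logistic_gt_zero: "0 < logistic t"
  and logistic_less_one: "logistic t < 1"
  unfolding logistic_def by (auto simp: add_pos_pos)

lemma logistic_has_real_derivative:
  "(logistic has_real_derivative 1 / (exp t + 2 + exp (- t))) (at t)"
proof -
  have pos: "0 < 1 + exp (- t)"
    by (simp add: add_pos_pos)
  have "(logistic has_real_derivative exp (- t) / (1 + exp (- t))^2) (at t)"
    unfolding logistic_def[abs_def]
    using pos by (auto intro!: derivative_eq_intros simp: power2_eq_square)
  moreover have "exp (- t) / (1 + exp (- t))^2 = 1 / (exp t + 2 + exp (- t))"
    by (simp add: exp_minus power2_eq_square field_simps add_pos_pos)
  ultimately show ?thesis by simp
qed

lemma exp_add_exp_minus_le:
  fixes t M :: real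
  assumes "\<bar>t\<bar> \<le> M"
  shows "exp t + 2 + exp (- t) \<le> 3 + exp M"
proof (cases "t \<ge> 0")
  case True
  then have "exp t \<le> exp M" "exp (- t) \<le> 1" using assms by auto
  then show ?thesis by linarith
next
  case False
  then have "exp (- t) \<le> exp M" "exp t \<le> 1" using assms by auto
  then show ?thesis by linarith
qed

lemma logistic_increment_ge:
  assumes "x \<le> y" "\<bar>x\<bar> \<le> M" "\<bar>y\<bar> \<le> M"
  shows "y - x \<le> (3 + exp M) * (logistic y - logistic x)"
proof (cases "x = y")
  case False
  then obtain z where z: "x < z" "z < y"
    and mvt: "logistic y - logistic x = (y - x) * (1 / (exp z + 2 + exp (- z)))"
    using MVT2[of x y logistic "\<lambda>t. 1 / (exp t + 2 + exp (- t))"] assms(1)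
      logistic_has_real_derivative by force
  have "(y - x) * (exp z + 2 + exp (- z)) \<le> (y - x) * (3 + exp M)"
    using z assms by (intro mult_left_mono exp_add_exp_minus_le) auto
  moreover have "0 < exp z + 2 + exp (- z)"
    by (simp add: add_pos_pos)
  ultimately show ?thesis
    by (simp add: mvt field_simps)
qed simp

lemma abs_diff_le_logistic_diff:
  assumes "\<bar>a\<bar> \<le> M" "\<bar>b\<bar> \<le> M"
  shows "\<bar>a - b\<bar> \<le> (3 + exp M) * \<bar>logistic a - logistic b\<bar>"
proof -
  have "\<bar>y - x\<bar> \<le> (3 + exp M) * \<bar>logistic y - logistic x\<bar>"
    if le: "x \<le> y" and bounds: "\<bar>x\<bar> \<le> M" "\<bar>y\<bar> \<le> M" for x y
  proof -
    have incr: "y - x \<le> (3 + exp M) * (logistic y - logistic x)"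
      using logistic_increment_ge[OF le bounds] .
    have "(3 + exp M) * 0 \<le> (3 + exp M) * (logistic y - logistic x)"
      using incr le by linarith
    then have "logistic x \<le> logistic y"
      using mult_le_cancel_left_pos[of "3 + exp M" 0] by (simp add: add_pos_pos)
    then show ?thesis
      using incr le by simp
  qed
  from this[of a b] this[of b a] assms show ?thesis
    by (cases "a \<le> b") (simp_all add: abs_minus_commute)
qed

lemma sq_le_of_two_factorizations:
  fixes D A B u w :: real
  assumes "D = A * u^2" "D = B * w^2" "A \<ge> 0" "B \<ge> 0" "u^2 + w^2 \<le> 4"
  shows "D \<le> A + B"
proof -
  define S where "S = u^2 + w^2"
  have "S \<ge> 0"
    by (simp add: S_def)
  then consider "S = 0" | "S > 0"
    by linarith
  then show ?thesis
  proof cases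
    case 1
    then show ?thesis using assms by (simp add: S_def)
  next
    case 2
    have "u^2 * w^2 \<le> S^2 / 4"
      using zero_le_power2[of "u^2 - w^2"] by (simp add: S_def power2_eq_square algebra_simps)
    also have "\<dots> \<le> S"
      using assms(5) mult_left_mono[of S 4 S] by (simp add: S_def power2_eq_square)
    finally have "(A + B) * (u^2 * w^2) \<le> (A + B) * S"
      using assms(3,4) by (simp add: mult_left_mono)
    moreover have "(A + B) * (u^2 * w^2) = (A * u^2) * w^2 + (B * w^2) * u^2"
      by (simp add: algebra_simps)
    then have "(A + B) * (u^2 * w^2) = D * S"
      unfolding assms(1,2)[symmetric] S_def by (simp add: algebra_simps)
    ultimately show ?thesis
      using 2 by (simp add: mult_le_cancel_right_pos)
  qed
qed

lemma sq_sum_le_two_sum_sq: "(a + b)^2 \<le> 2 * (a^2 + b^2)" for a b :: real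
  using zero_le_power2[of "a - b"] by (simp add: power2_sum power2_diff)

lemma sq_diff_le_bernoulli_hellinger:
  fixes p q :: real
  assumes "0 \<le> p" "p \<le> 1" "0 \<le> q" "q \<le> 1"
  shows "(p - q)^2 \<le> (sqrt p - sqrt q)^2 + (sqrt (1 - p) - sqrt (1 - q))^2"
proof (rule sq_le_of_two_factorizations)
  have "p - q = (sqrt p - sqrt q) * (sqrt p + sqrt q)"
    using assms by (simp add: algebra_simps)
  then show "(p - q)^2 = (sqrt p - sqrt q)^2 * (sqrt p + sqrt q)^2"
    by (simp add: power_mult_distrib[symmetric])
  have "q - p = (sqrt (1 - p) - sqrt (1 - q)) * (sqrt (1 - p) + sqrt (1 - q))"
    using assms by (simp add: algebra_simps)
  then show "(p - q)^2 = (sqrt (1 - p) - sqrt (1 - q))^2 * (sqrt (1 - p) + sqrt (1 - q))^2"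
    by (metis power2_commute power_mult_distrib)
  show "(sqrt p + sqrt q)^2 + (sqrt (1 - p) + sqrt (1 - q))^2 \<le> 4"
    using sq_sum_le_two_sum_sq[of "sqrt p" "sqrt q"]
      sq_sum_le_two_sum_sq[of "sqrt (1 - p)" "sqrt (1 - q)"] assms
    by simp
qed simp_all

lemma hellinger_sq_bool:
  "hellinger_sq P Q
     = ((sqrt (P True) - sqrt (Q True))^2 + (sqrt (P False) - sqrt (Q False))^2) / 2"
  unfolding hellinger_sq_def UNIV_bool by simp

theorem lemma4:
  fixes r1 r2 :: "'x \<Rightarrow> 'y \<Rightarrow> real" and C :: real
    and x :: 'x and y1 y2 :: 'y
  assumes "\<forall>a b. \<bar>r1 a b\<bar> \<le> C"
    and "\<forall>a b. \<bar>r2 a b\<bar> \<le> C"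
  shows "(delta_BT r1 r2 x y1 y2)^2
    \<le> 2 * (3 + exp (2 * C))^2 * hellinger_sq (BT_prob r1 x y1 y2) (BT_prob r2 x y1 y2)"
proof -
  define a where "a = r1 x y1 - r1 x y2"
  define b where "b = r2 x y1 - r2 x y2"
  have "\<bar>r1 x y1\<bar> \<le> C" "\<bar>r1 x y2\<bar> \<le> C" "\<bar>r2 x y1\<bar> \<le> C" "\<bar>r2 x y2\<bar> \<le> C"
    using assms by blast+
  then have bounds: "\<bar>a\<bar> \<le> 2 * C" "\<bar>b\<bar> \<le> 2 * C"
    unfolding a_def b_def by linarith+
  have "(delta_BT r1 r2 x y1 y2)^2 = \<bar>a - b\<bar>^2"
    by (simp add: delta_BT_def a_def b_def)
  also have "\<dots> \<le> ((3 + exp (2 * C)) * \<bar>logistic a - logistic b\<bar>)^2"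
    using abs_diff_le_logistic_diff[OF bounds] by (intro power_mono) auto
  also have "\<dots> = (3 + exp (2 * C))^2 * (logistic a - logistic b)^2"
    by (simp add: power_mult_distrib)
  also have "\<dots> \<le> (3 + exp (2 * C))^2
      * ((sqrt (logistic a) - sqrt (logistic b))^2
         + (sqrt (1 - logistic a) - sqrt (1 - logistic b))^2)"
    by (intro mult_left_mono sq_diff_le_bernoulli_hellinger)
      (auto simp: logistic_gt_zero logistic_less_one less_imp_le)
  also have "\<dots> = 2 * (3 + exp (2 * C))^2
      * hellinger_sq (BT_prob r1 x y1 y2) (BT_prob r2 x y1 y2)"
    by (simp add: hellinger_sq_bool BT_prob_def a_def b_def)
  finally show ?thesis .
qed

end
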